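(* Let $\gamma\in\,]0,+\infty[$ and let $h\colon\mathbb{R}\to\mathbb{R}\colon v\mapsto\log(1+\exp(-v))$. Then for every $v\in\mathbb{R}$, $$\mathrm{prox}_{\gamma h}(v)=v+\mathrm{W}_{\exp(-v)}\big(\gamma\exp(-v)\big).$$
   Context: For a convex function $\psi\colon\mathbb{R}\to\mathbb{R}$, $\mathrm{prox}_\psi(v)$ is the unique minimizer over $p\in\mathbb{R}$ of $\frac12(p-v)^2+\psi(p)$. Generalized Lambert W function: for $r\in\,]0,+\infty[$ and $x\in\,]0,+\infty[$, $\mathrm{W}_r(x)$ denotes the unique real number $\bar v$ such that $\bar v(\exp(\bar v)+r)=x$ (this solution is positive; it is the branch of the generalized Lambert function taking nonnegative values, which is strictly increasing). *)

theory Defs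
  imports "HOL-Analysis.Analysis"
begin

definition prox :: "(real \<Rightarrow> real) \<Rightarrow> real \<Rightarrow> real" where
  "prox psi v = (THE p. \<forall>q. (1/2) * (p - v)^2 + psi p \<le> (1/2) * (q - v)^2 + psi q)"

text \<open>Generalized Lambert W function: for r > 0, x > 0, the unique real w with w (exp w + r) = x.\<close>
definition genW :: "real \<Rightarrow> real \<Rightarrow> real" where
  "genW r x = (THE w. w * (exp w + r) = x)"

end

theory Submission
  imports Defs
begin

text \<open>The optimality condition of the proximal problem at p = v + w reads
  w = gamma / (1 + exp (v + w)), i.e. w (exp w + exp (- v)) = gamma exp (- v), which is the defining
  equation of the generalized Lambert function. Since h is convex, this first-order condition
  identifies the unique minimizer: the tangent line of h at p bounds h from below, and the
  quadratic term makes the minimum strict.\<close>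

lemma one_plus_exp_gt_zero [simp]: "0 < 1 + exp (x::real)"
  by (simp add: add_pos_pos)

lemma one_plus_exp_neq_zero [simp]: "1 + exp (x::real) \<noteq> 0"
  using one_plus_exp_gt_zero[of x] by linarith

lemma genW_eqI:
  fixes r x w :: real
  assumes "r > 0" "x > 0" "w * (exp w + r) = x"
  shows "genW r x = w"
  unfolding genW_def
proof (rule the_equality)
  have pos: "u > 0" if "u * (exp u + r) = x" for u
  proof (rule ccontr)
    assume "\<not> u > 0"
    then have "u * (exp u + r) \<le> 0"
      using \<open>r > 0\<close> by (intro mult_nonpos_nonneg) (auto intro: add_nonneg_nonneg)
    with that \<open>x > 0\<close> show False by simp
  qed
  have mono: "a * (exp a + r) < b * (exp b + r)" if "0 < a" "a < b" for a b
    using that \<open>r > 0\<close> by (intro mult_strict_mono) auto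
  fix u assume u: "u * (exp u + r) = x"
  show "u = w"
    using mono[of u w] mono[of w u] pos[OF u] pos[OF assms(3)] u assms(3)
    by (cases u w rule: linorder_cases) auto
qed (fact assms(3))

lemma genW_exists:
  fixes r x :: real
  assumes "r > 0" "x > 0"
  shows "\<exists>w. w * (exp w + r) = x"
proof -
  have "\<exists>w\<ge>0. w \<le> x / r \<and> w * (exp w + r) = x"
  proof (rule IVT)
    have "x / r * r \<le> x / r * (exp (x / r) + r)"
      using assms by (intro mult_left_mono) auto
    then show "x \<le> x / r * (exp (x / r) + r)"
      using assms by simp
  qed (use assms in \<open>auto intro!: continuous_intros\<close>)
  then show ?thesis by blast
qed

lemma genW_equation:
  fixes r x :: real
  assumes "r > 0" "x > 0"
  shows "genW r x * (exp (genW r x) + r) = x"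
  using genW_exists[OF assms] genW_eqI[OF assms] by metis

lemma prox_eqI_subgradient:
  fixes psi :: "real \<Rightarrow> real"
  assumes "\<And>q. psi q \<ge> psi p + (v - p) * (q - p)"
  shows "prox psi v = p"
proof -
  define f where "f q = (1/2) * (q - v)^2 + psi q" for q
  have strict: "f p < f q" if "q \<noteq> p" for q
  proof -
    have "(1/2) * (q - v)^2 = (1/2) * (p - v)^2 - (v - p) * (q - p) + (1/2) * (q - p)^2"
      by (simp add: power2_eq_square algebra_simps)
    moreover have "(q - p)^2 > 0"
      using that by simp
    ultimately show ?thesis
      unfolding f_def using assms[of q] by linarith
  qed
  show ?thesis
    unfolding prox_def
  proof (rule the_equality)
    show "\<forall>q. (1/2) * (p - v)^2 + psi p \<le> (1/2) * (q - v)^2 + psi q"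
      using strict unfolding f_def by (metis order.order_iff_strict)
  next
    fix p' assume "\<forall>q. (1/2) * (p' - v)^2 + psi p' \<le> (1/2) * (q - v)^2 + psi q"
    then have "f p' \<le> f p"
      unfolding f_def by blast
    then show "p' = p"
      using strict[of p'] by fastforce
  qed
qed

lemma ln_one_plus_exp_minus: "ln (1 + exp (- q)) = ln (1 + exp q) - (q::real)"
proof -
  have "1 + exp (- q) = (1 + exp q) * exp (- q)"
    by (simp add: exp_minus field_simps)
  then show ?thesis
    by (simp add: ln_mult)
qed

text \<open>Tangent inequality of the convex function ln (1 + exp q), obtained from convexity of exp
  with weight s = exp p / (1 + exp p).\<close>

lemma ln_one_plus_exp_above_tangent:
  fixes p q :: real
  shows "ln (1 + exp q) \<ge> ln (1 + exp p) + exp p / (1 + exp p) * (q - p)"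
proof -
  define s where "s = exp p / (1 + exp p)"
  have s: "0 \<le> s" "s \<le> 1"
    unfolding s_def by (simp_all add: divide_le_eq_1)
  have "exp (s * (q - p)) \<le> (1 - s) + s * exp (q - p)"
    using convex_onD[OF exp_convex, of s 0 "q - p"] s by simp
  also have "\<dots> = (1 + exp q) / (1 + exp p)"
    unfolding s_def by (simp add: field_simps exp_diff)
  finally have "s * (q - p) \<le> ln ((1 + exp q) / (1 + exp p))"
    by (simp add: ln_ge_iff)
  then show ?thesis
    unfolding s_def by (simp add: ln_div)
qed

lemma ln_one_plus_exp_minus_above_tangent:
  fixes p q :: real
  shows "ln (1 + exp (- q)) \<ge> ln (1 + exp (- p)) - (q - p) / (1 + exp p)"
proof -
  have "(q - p) - (q - p) / (1 + exp p) = exp p / (1 + exp p) * (q - p)"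
    by (simp add: field_simps)
  then show ?thesis
    using ln_one_plus_exp_above_tangent[of p q] unfolding ln_one_plus_exp_minus by linarith
qed

theorem proposition2:
  fixes gamma :: real and h :: "real \<Rightarrow> real"
  assumes "gamma > 0"
    and "\<And>v. h v = ln (1 + exp (- v))"
  shows "\<forall>v::real. prox (\<lambda>p. gamma * h p) v = v + genW (exp (- v)) (gamma * exp (- v))"
proof
  fix v :: real
  define w where "w = genW (exp (- v)) (gamma * exp (- v))"
  have "w * (exp w + exp (- v)) = gamma * exp (- v)"
    unfolding w_def using assms(1) by (intro genW_equation) auto
  then have "w * (1 + exp (v + w)) = gamma"
    by (simp add: exp_add exp_minus field_simps)
  then have w: "w = gamma / (1 + exp (v + w))"
    by (simp add: field_simps)
  have "gamma * h q \<ge> gamma * h (v + w) + (v - (v + w)) * (q - (v + w))" for q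
  proof -
    have "gamma * h q \<ge> gamma * h (v + w) - gamma * ((q - (v + w)) / (1 + exp (v + w)))"
      using mult_left_mono[OF ln_one_plus_exp_minus_above_tangent[of "v + w" q], of gamma] assms
      by (simp add: right_diff_distrib)
    moreover have "gamma * ((q - (v + w)) / (1 + exp (v + w))) = w * (q - (v + w))"
      by (subst w) simp
    ultimately show ?thesis
      by simp
  qed
  then show "prox (\<lambda>p. gamma * h p) v = v + genW (exp (- v)) (gamma * exp (- v))"
    unfolding w_def[symmetric] by (rule prox_eqI_subgradient)
qed

end
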